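(* Let $n\ge 1$ and let $\pi$ be a permutation of length $n$ that has a distant inverse-descent. Then $\zeta_n$ contains a subsequence order-isomorphic to $\pi$.
   Context: A permutation of length $n$ is a word containing each letter of $[n]=\{1,\dots,n\}$ exactly once. Two words $u,v$ of the same length $k$ over the positive integers are order-isomorphic if for all $i,j\in[k]$, $u(i)>u(j)\iff v(i)>v(j)$. A word $w$ contains a subsequence order-isomorphic to $\pi$ if there are indices $i_1<\cdots<i_n$ with $w(i_1)\cdots w(i_n)$ order-isomorphic to $\pi$. Entries $\pi(j),\pi(k)$ form an inverse-descent if $j<k$ and $\pi(j)=\pi(k)+1$; it is a distant inverse-descent if moreover $k\ge j+2$. The word $z_n$ is the concatenation of $n$ runs $r_1r_2\cdots r_n$, where for odd $k$ the run $r_k$ lists the odd integers in $[n]$ in increasing order and for even $k$ the run $r_k$ lists the even integers in $[n]$ in decreasing order (so $|z_n|=n^2/2$ for even $n$ and $(n^2+1)/2$ for odd $n$). The permutation $\zeta_n$ of length $|z_n|$ is the unique permutation such that for all indices $i\ne j$: $\zeta_n(i)>\zeta_n(j)$ if and only if either $z_n(i)>z_n(j)$, or $z_n(i)=z_n(j)$ and $i<j$. *)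

theory Defs
  imports Main
begin

(* Words are lists of positive integers; positions are 0-indexed in the list. *)

definition is_perm :: "nat list \<Rightarrow> bool" where
  "is_perm p \<longleftrightarrow> distinct p \<and> set p = {1..length p}"

definition order_iso :: "nat list \<Rightarrow> nat list \<Rightarrow> bool" where
  "order_iso u v \<longleftrightarrow> length u = length v \<and>
     (\<forall>i<length u. \<forall>j<length u. u ! i > u ! j \<longleftrightarrow> v ! i > v ! j)"

definition contains :: "nat list \<Rightarrow> nat list \<Rightarrow> bool" where
  "contains w p \<longleftrightarrow> (\<exists>idx :: nat \<Rightarrow> nat.
      (\<forall>a b. a < b \<and> b < length p \<longrightarrow> idx a < idx b) \<and>
      (\<forall>a<length p. idx a < length w) \<and>
      order_iso (map (\<lambda>a. w ! idx a) [0..<length p]) p)"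

definition has_distant_inverse_descent :: "nat list \<Rightarrow> bool" where
  "has_distant_inverse_descent p \<longleftrightarrow>
     (\<exists>j k. j < k \<and> k < length p \<and> p ! j = p ! k + 1 \<and> j + 2 \<le> k)"

definition run :: "nat \<Rightarrow> nat \<Rightarrow> nat list" where
  "run n k = (if odd k then filter odd [1..<n+1] else rev (filter even [1..<n+1]))"

definition z_word :: "nat \<Rightarrow> nat list" where
  "z_word n = concat (map (run n) [1..<n+1])"

(* zeta(i) > zeta(j) iff z(i) > z(j) or (z(i) = z(j) and i < j);
   so zeta(i) = 1 + #{j \<noteq> i below i in this strict total order}. *)
definition zeta :: "nat \<Rightarrow> nat list" where
  "zeta n = (let z = z_word n in
     map (\<lambda>i. Suc (card {j. j < length z \<and> j \<noteq> i \<and>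
                  (z ! j < z ! i \<or> (z ! j = z ! i \<and> i < j))}))
         [0..<length z])"

end

theory Submission
  imports Defs "HOL-Library.Sublist"
begin

text \<open>Let \<open>\<pi>(j) = m + 1\<close> and \<open>\<pi>(k) = m\<close> with \<open>k \<ge> j + 2\<close>. Merging the values \<open>m\<close> and
  \<open>m + 1\<close> turns \<open>\<pi>\<close> into a word \<open>c\<close> over \<open>[n-1]\<close> without equal adjacent letters, and every
  occurrence of \<open>c\<close> in \<open>z_n\<close> is an occurrence of \<open>\<pi>\<close> in \<open>\<zeta>_n\<close>, since \<open>\<zeta>_n\<close> ranks equal
  letters of \<open>z_n\<close> with the earlier one on top. Embedding a word greedily into the runs of
  \<open>z_n\<close>, each step \<open>x \<rightarrow> y\<close> with \<open>x \<noteq> y\<close> advances by 0, 1 or 2 runs, and for \<open>c\<close> and its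
  shift \<open>c + 1\<close> these advances add up to 2. So the greedy embeddings of \<open>c\<close> and \<open>c + 1\<close>
  together use \<open>2n + 1\<close> runs, and one of the two words fits into the \<open>n\<close> runs of \<open>z_n\<close>.\<close>

text \<open>\<open>\<zeta>_n\<close> is the rank function of the order \<open>std_greater (z_word n)\<close> on positions.\<close>

definition std_greater :: "nat list \<Rightarrow> nat \<Rightarrow> nat \<Rightarrow> bool" where
  "std_greater w i j \<longleftrightarrow> w ! j < w ! i \<or> (w ! i = w ! j \<and> i < j)"

lemma std_greater_total: "i \<noteq> j \<Longrightarrow> std_greater w i j \<or> std_greater w j i"
  by (auto simp: std_greater_def)

lemma card_std_greater_less:
  assumes "std_greater w i j" and "j < length w"
  shows "card {t. t < length w \<and> std_greater w j t} < card {t. t < length w \<and> std_greater w i t}"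
proof (rule psubset_card_mono)
  show "{t. t < length w \<and> std_greater w j t} \<subset> {t. t < length w \<and> std_greater w i t}"
    using assms by (auto simp: std_greater_def)
qed simp

lemma length_zeta: "length (zeta n) = length (z_word n)"
  by (simp add: zeta_def Let_def)

lemma nth_zeta:
  "i < length (z_word n) \<Longrightarrow>
     zeta n ! i = Suc (card {j. j < length (z_word n) \<and> std_greater (z_word n) i j})"
  unfolding zeta_def Let_def std_greater_def
  by (auto intro!: arg_cong[where f = card])

lemma zeta_greater_iff:
  assumes "i < length (z_word n)" "j < length (z_word n)" "i \<noteq> j"
  shows "zeta n ! j < zeta n ! i \<longleftrightarrow> std_greater (z_word n) i j"
  using card_std_greater_less[of "z_word n" i j] card_std_greater_less[of "z_word n" j i]
    std_greater_total[OF assms(3), of "z_word n"] assms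
  by (auto simp: nth_zeta)

lemma subseq_indices:
  assumes "subseq xs ys"
  obtains idx where "\<And>a b. a < b \<Longrightarrow> b < length xs \<Longrightarrow> idx a < idx b"
    and "\<And>a. a < length xs \<Longrightarrow> idx a < length ys \<and> ys ! idx a = xs ! a"
proof -
  from assms have "\<exists>idx. (\<forall>a b. a < b \<and> b < length xs \<longrightarrow> idx a < idx b) \<and>
      (\<forall>a < length xs. idx a < length ys \<and> ys ! idx a = xs ! a)"
  proof (induction rule: list_emb.induct)
    case (list_emb_Nil ys)
    show ?case by simp
  next
    case (list_emb_Cons xs ys y)
    then obtain idx where "\<forall>a b. a < b \<and> b < length xs \<longrightarrow> idx a < idx b"
      and "\<forall>a < length xs. idx a < length ys \<and> ys ! idx a = xs ! a"
      by blast
    then show ?case by (intro exI[of _ "Suc \<circ> idx"]) auto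
  next
    case (list_emb_Cons2 x y xs ys)
    then obtain idx where mono: "\<forall>a b. a < b \<and> b < length xs \<longrightarrow> idx a < idx b"
      and nth: "\<forall>a < length xs. idx a < length ys \<and> ys ! idx a = xs ! a"
      by blast
    let ?idx = "\<lambda>a. case a of 0 \<Rightarrow> 0 | Suc a' \<Rightarrow> Suc (idx a')"
    have "\<forall>a b. a < b \<and> b < length (x # xs) \<longrightarrow> ?idx a < ?idx b"
      using mono by (auto split: nat.split)
    moreover have "\<forall>a < length (x # xs). ?idx a < length (y # ys) \<and> (y # ys) ! ?idx a = (x # xs) ! a"
      using nth list_emb_Cons2.hyps by (auto split: nat.split)
    ultimately show ?case by blast
  qed
  then show ?thesis using that by blast
qed

lemma contains_zeta_if_subseq:
  assumes sub: "subseq w (z_word n)" and len: "length w = length p"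
    and pattern: "\<And>a b. a < length p \<Longrightarrow> b < length p \<Longrightarrow>
                    std_greater w a b \<longleftrightarrow> p ! b < p ! a"
  shows "contains (zeta n) p"
proof -
  obtain idx where mono: "\<And>a b. a < b \<Longrightarrow> b < length w \<Longrightarrow> idx a < idx b"
    and nth: "\<And>a. a < length w \<Longrightarrow> idx a < length (z_word n) \<and> z_word n ! idx a = w ! a"
    using subseq_indices[OF sub] by blast
  have "zeta n ! idx b < zeta n ! idx a \<longleftrightarrow> p ! b < p ! a"
    if ab: "a < length p" "b < length p" for a b
  proof (cases "a = b")
    case False
    then have "idx a \<noteq> idx b" and "idx a < idx b \<longleftrightarrow> a < b"
      using mono[of a b] mono[of b a] ab len by (auto simp: nat_neq_iff)
    moreover have "std_greater (z_word n) (idx a) (idx b) \<longleftrightarrow> std_greater w a b"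
      using nth ab len \<open>idx a < idx b \<longleftrightarrow> a < b\<close> by (simp add: std_greater_def)
    ultimately show ?thesis
      using zeta_greater_iff nth pattern ab len False by auto
  qed simp
  then show ?thesis
    unfolding contains_def order_iso_def
    using mono nth len length_zeta by (intro exI[of _ idx]) auto
qed

definition runs_from :: "nat \<Rightarrow> nat \<Rightarrow> nat list" where
  "runs_from n r = concat (map (run n) [r..<n+1])"

definition run_from :: "nat \<Rightarrow> nat \<Rightarrow> nat list" where
  "run_from n x = (if odd x then filter odd [x..<n+1] else rev (filter even [1..<x+1]))"

lemma z_word_eq_runs_from: "z_word n = runs_from n 1"
  by (simp add: z_word_def runs_from_def)

lemma runs_from_Suc: "r \<le> n \<Longrightarrow> runs_from n r = run n r @ runs_from n (Suc r)"
  by (simp add: runs_from_def upt_conv_Cons del: upt_Suc)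

lemma suffix_runs_from: "r \<le> r' \<Longrightarrow> suffix (runs_from n r') (runs_from n r)"
proof (cases "r' \<le> n + 1")
  case True
  assume "r \<le> r'"
  then have "[r..<n+1] = [r..<r'] @ [r'..<n+1]"
    using True upt_add_eq_append[of r r' "n + 1 - r'"] by simp
  then show ?thesis by (simp add: runs_from_def suffix_def)
qed (simp add: runs_from_def)

lemma run_from_Cons:
  assumes "1 \<le> x" "x \<le> n"
  shows "\<exists>t. run_from n x = x # t"
proof (cases "odd x")
  case True
  then show ?thesis using assms by (simp add: run_from_def upt_conv_Cons del: upt_Suc)
next
  case False
  then show ?thesis using assms by (simp add: run_from_def)
qed

lemma suffix_run_from:
  assumes "1 \<le> x" "x \<le> n" "odd r \<longleftrightarrow> odd x"
  shows "suffix (run_from n x) (run n r)"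
proof (cases "odd x")
  case True
  then have "[1..<n+1] = [1..<x] @ [x..<n+1]"
    using assms upt_add_eq_append[of 1 x "n + 1 - x"] by simp
  then show ?thesis using True assms by (simp add: run_from_def run_def suffix_def)
next
  case False
  then have "[1..<n+1] = [1..<x+1] @ [x+1..<n+1]"
    using assms upt_add_eq_append[of 1 "x + 1" "n - x"] by simp
  then have "run n r = rev (filter even [x+1..<n+1]) @ run_from n x"
    using False assms by (simp add: run_from_def run_def del: upt_Suc)
  then show ?thesis unfolding suffix_def by blast
qed

lemma suffix_run_from_runs_from:
  assumes "1 \<le> x" "x \<le> n" "odd r \<longleftrightarrow> odd x" "r0 \<le> r" "r \<le> n"
  shows "suffix (run_from n x @ runs_from n (Suc r)) (runs_from n r0)"
proof -
  have "suffix (run_from n x @ runs_from n (Suc r)) (runs_from n r)"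
    using suffix_run_from[OF assms(1-3)] runs_from_Suc[OF assms(5)]
    by (auto simp: suffix_def)
  then show ?thesis using suffix_runs_from[OF assms(4)] suffix_order.trans by blast
qed

text \<open>The greedy embedding of a word into \<open>z_n\<close> reads each letter at its first occurrence
  after the previous one; \<open>run_gap x y\<close> is the number of runs it advances between reading
  \<open>x\<close> and the following letter \<open>y\<close>, and \<open>greedy_run c\<close> is the run where it reads the last
  letter of \<open>c\<close>.\<close>

definition run_gap :: "nat \<Rightarrow> nat \<Rightarrow> nat" where
  "run_gap x y =
     (if odd x \<noteq> odd y then 1 else if (if odd x then x < y else y < x) then 0 else 2)"

fun run_gaps :: "nat list \<Rightarrow> nat" where
  "run_gaps (x # y # c) = run_gap x y + run_gaps (y # c)"
| "run_gaps _ = 0"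

definition greedy_run :: "nat list \<Rightarrow> nat" where
  "greedy_run c = (if odd (hd c) then 1 else 2) + run_gaps c"

lemma run_from_run_gap_0:
  assumes "1 \<le> y" "y \<le> n" "run_gap x y = 0"
  shows "\<exists>t. run_from n x = x # t @ run_from n y"
proof (cases "odd x")
  case True
  then have "odd y" "x < y" using assms(3) by (auto simp: run_gap_def split: if_splits)
  then have "[x..<n+1] = x # [Suc x..<y] @ [y..<n+1]"
    using assms upt_add_eq_append[of x y "n + 1 - y"] by (simp add: upt_conv_Cons)
  then show ?thesis using True \<open>odd y\<close> by (simp add: run_from_def)
next
  case False
  then have "even y" "y < x" using assms(3) by (auto simp: run_gap_def split: if_splits)
  then have "[1..<x+1] = [1..<y+1] @ [y+1..<x] @ [x]"
    using assms upt_add_eq_append[of 1 "y + 1" "x - y - 1"] by simp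
  then show ?thesis using False \<open>even y\<close> by (simp add: run_from_def)
qed

lemma subseq_greedy:
  assumes "set (x # c) \<subseteq> {1..n}" "odd r \<longleftrightarrow> odd x" "r + run_gaps (x # c) \<le> n"
  shows "subseq (x # c) (run_from n x @ runs_from n (Suc r))"
  using assms
proof (induction c arbitrary: x r)
  case Nil
  then show ?case using run_from_Cons[of x n] by auto
next
  case (Cons y c)
  show ?case
  proof (cases "run_gap x y = 0")
    case True
    then have "odd r \<longleftrightarrow> odd y" using Cons.prems(2) by (auto simp: run_gap_def split: if_splits)
    then have "subseq (y # c) (run_from n y @ runs_from n (Suc r))"
      using Cons.IH[of y r] Cons.prems True by simp
    moreover obtain t where "run_from n x = x # t @ run_from n y"
      using run_from_run_gap_0[of y n x] Cons.prems(1) True by auto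
    ultimately show ?thesis using subseq_drop_many[of "y # c" _ t] by simp
  next
    case False
    define r' where "r' = r + run_gap x y"
    have "odd r' \<longleftrightarrow> odd y" "Suc r \<le> r'"
      using Cons.prems(2) False by (auto simp: r'_def run_gap_def split: if_splits)
    moreover have "r' + run_gaps (y # c) \<le> n" using Cons.prems(3) by (simp add: r'_def)
    ultimately have "subseq (y # c) (run_from n y @ runs_from n (Suc r'))"
      and "suffix (run_from n y @ runs_from n (Suc r')) (runs_from n (Suc r))"
      using Cons.IH[of y r'] Cons.prems(1) suffix_run_from_runs_from[of y n r' "Suc r"]
      by simp_all
    then have "subseq (y # c) (runs_from n (Suc r))"
      using subseq_order.trans suffix_imp_subseq by blast
    moreover obtain t where "run_from n x = x # t"
      using run_from_Cons[of x n] Cons.prems(1) by auto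
    ultimately show ?thesis using subseq_drop_many[of "y # c" _ t] by simp
  qed
qed

lemma subseq_z_word_if_greedy_run_le:
  assumes "c \<noteq> []" "set c \<subseteq> {1..n}" "greedy_run c \<le> n"
  shows "subseq c (z_word n)"
proof -
  obtain x c' where c: "c = x # c'" using assms(1) by (cases c) auto
  define r where "r = (if odd x then 1 else 2 :: nat)"
  have "subseq c (run_from n x @ runs_from n (Suc r))"
    using subseq_greedy[of x c' n r] assms(2,3) by (simp add: c r_def greedy_run_def)
  moreover have "suffix (run_from n x @ runs_from n (Suc r)) (runs_from n 1)"
    using suffix_run_from_runs_from[of x n r 1] assms(2,3) by (simp add: c r_def greedy_run_def)
  ultimately show ?thesis
    unfolding z_word_eq_runs_from using subseq_order.trans suffix_imp_subseq by blast
qed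

lemma run_gap_shift: "x \<noteq> y \<Longrightarrow> run_gap x y + run_gap (Suc x) (Suc y) = 2"
  by (auto simp: run_gap_def)

lemma run_gaps_shift: "distinct_adj c \<Longrightarrow> run_gaps c + run_gaps (map Suc c) = 2 * (length c - 1)"
proof (induction c rule: run_gaps.induct)
  case (1 x y c)
  then show ?case using run_gap_shift[of x y] by simp
qed simp_all

lemma greedy_run_shift:
  "distinct_adj c \<Longrightarrow> c \<noteq> [] \<Longrightarrow> greedy_run c + greedy_run (map Suc c) = 2 * length c + 1"
  using run_gaps_shift[of c] by (cases c) (auto simp: greedy_run_def)

lemma subseq_z_word_or_shift:
  assumes "distinct_adj c" "c \<noteq> []" "set c \<subseteq> {1..<length c}"
  shows "subseq c (z_word (length c)) \<or> subseq (map Suc c) (z_word (length c))"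
proof -
  have "greedy_run c \<le> length c \<or> greedy_run (map Suc c) \<le> length c"
    using greedy_run_shift[OF assms(1,2)] by linarith
  moreover have "set c \<subseteq> {1..length c}" and "set (map Suc c) \<subseteq> {1..length c}"
    using assms(3) by auto
  ultimately show ?thesis
    using subseq_z_word_if_greedy_run_le assms(2) by (metis list.map_disc_iff)
qed

definition collapse :: "nat \<Rightarrow> nat \<Rightarrow> nat" where
  "collapse m v = (if v \<le> m then v else v - 1)"

lemma collapse_mono: "v \<le> w \<Longrightarrow> collapse m v \<le> collapse m w"
  by (auto simp: collapse_def)

lemma collapse_eq_iff:
  "collapse m v = collapse m w \<longleftrightarrow> v = w \<or> (v = m \<and> w = Suc m) \<or> (v = Suc m \<and> w = m)"
  by (auto simp: collapse_def)

lemma std_greater_collapse: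
  assumes "distinct p" "j < k" "k < length p" "p ! j = Suc (p ! k)"
    and "a < length p" "b < length p"
  shows "std_greater (map (collapse (p ! k)) p) a b \<longleftrightarrow> p ! b < p ! a"
proof -
  have nth_eq: "p ! u = p ! v \<longleftrightarrow> u = v" if "u < length p" "v < length p" for u v
    using assms(1) that by (simp add: nth_eq_iff_index_eq)
  show ?thesis
  proof (cases "collapse (p ! k) (p ! a) = collapse (p ! k) (p ! b)")
    case True
    then have "p ! a = p ! b \<or> (p ! a = p ! k \<and> p ! b = p ! j) \<or> (p ! a = p ! j \<and> p ! b = p ! k)"
      using assms(4) by (auto simp: collapse_eq_iff)
    then have "a = b \<or> (a = k \<and> b = j) \<or> (a = j \<and> b = k)"
      using nth_eq assms(2,3,5,6) by (metis order.strict_trans)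
    then show ?thesis using True assms by (auto simp: std_greater_def)
  next
    case False
    then have "collapse (p ! k) (p ! b) < collapse (p ! k) (p ! a) \<longleftrightarrow> p ! b < p ! a"
      using collapse_mono[of "p ! a" "p ! b" "p ! k"] collapse_mono[of "p ! b" "p ! a" "p ! k"]
      by (metis le_less not_le)
    then show ?thesis using False assms(5,6) by (auto simp: std_greater_def)
  qed
qed

lemma distinct_adj_collapse:
  assumes "distinct p" "j < k" "k < length p" "p ! j = Suc (p ! k)" "Suc j \<noteq> k"
  shows "distinct_adj (map (collapse (p ! k)) p)"
  unfolding distinct_adj_conv_nth
proof (intro allI impI notI)
  fix i assume i: "Suc i < length (map (collapse (p ! k)) p)"
    and eq: "map (collapse (p ! k)) p ! i = map (collapse (p ! k)) p ! Suc i"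
  have nth_eq: "p ! u = p ! v \<longleftrightarrow> u = v" if "u < length p" "v < length p" for u v
    using assms(1) that by (simp add: nth_eq_iff_index_eq)
  have "p ! i \<noteq> p ! Suc i" using nth_eq[of i "Suc i"] i by simp
  then have "(p ! i = p ! k \<and> p ! Suc i = p ! j) \<or> (p ! i = p ! j \<and> p ! Suc i = p ! k)"
    using eq i assms(4) by (auto simp: collapse_eq_iff)
  then have "(i = k \<and> Suc i = j) \<or> (i = j \<and> Suc i = k)"
    using nth_eq i assms(2,3) by (metis Suc_lessD length_map order.strict_trans)
  then show False using assms(2,5) by auto
qed

lemma std_greater_map_Suc:
  "a < length w \<Longrightarrow> b < length w \<Longrightarrow> std_greater (map Suc w) a b \<longleftrightarrow> std_greater w a b"
  by (simp add: std_greater_def)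

theorem proposition6p1:
  fixes n :: nat and p :: "nat list"
  assumes "n \<ge> 1" and "is_perm p" and "length p = n"
    and "has_distant_inverse_descent p"
  shows "contains (zeta n) p"
proof -
  obtain j k where jk: "j < k" "k < length p" "p ! j = Suc (p ! k)" and "j + 2 \<le> k"
    using assms(4) unfolding has_distant_inverse_descent_def by auto
  then have not_adjacent: "Suc j \<noteq> k" by simp
  have perm: "distinct p" "set p = {1..n}" using assms(2,3) by (auto simp: is_perm_def)
  define c where "c = map (collapse (p ! k)) p"
  have len: "length c = length p" by (simp add: c_def)
  have pattern: "std_greater c a b \<longleftrightarrow> p ! b < p ! a" if "a < length p" "b < length p" for a b
    unfolding c_def by (rule std_greater_collapse[OF perm(1) jk(1-3) that])
  have "p ! k \<in> {1..n}" "p ! j \<in> {1..n}"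
    using perm(2) jk(1,2) nth_mem by (metis order.strict_trans)+
  then have "set c \<subseteq> {1..<length c}"
    using perm(2) assms(3) by (auto simp: c_def collapse_def jk(3))
  moreover have "distinct_adj c"
    unfolding c_def by (rule distinct_adj_collapse[OF perm(1) jk not_adjacent])
  moreover have "c \<noteq> []" using assms(1,3) len by auto
  ultimately have "subseq c (z_word n) \<or> subseq (map Suc c) (z_word n)"
    using subseq_z_word_or_shift[of c] assms(3) len by simp
  then show ?thesis
  proof
    assume "subseq c (z_word n)"
    then show ?thesis using contains_zeta_if_subseq len pattern by blast
  next
    assume "subseq (map Suc c) (z_word n)"
    then show ?thesis
      using contains_zeta_if_subseq len pattern std_greater_map_Suc[of _ c] by simp
  qed
qed

end
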